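(* Let $X\in\mathcal{C}^\circ(\mathbb{R}^2)$ admit a GCGR with sufficient scaling factor $\eta(X)$, let $x_G\in\mathrm{int}X$ and $r>0$. Then for each integer $m\ge\eta(X)$, the family $\mathcal{P}_{\mathrm{grid}}(X,x_G,m)=\{P_{\mathrm{grid}}(X,x_I,x_G,m): x_I\in\mathrm{int}X\}$ contains only finitely many pairwise non-isomorphic planning problems.
   Context: $\mathcal{C}^\circ(\mathbb{R}^2)$ is the collection of compact, connected subsets of $\mathbb{R}^2$ with non-empty interior. For $x\in X$, $m\in\mathbb{N}$: $X_{\mathrm{grid}}(x,m):=\mathrm{int}X\cap(x+2^{-m}(\mathbb{Z}\times\mathbb{Z}))$; such a set is connected if any two of its points are joined by a chain of its points with consecutive points at distance $2^{-m}$. $X$ admits a GCGR with sufficient scaling factor $\eta(X)\in\mathbb{N}$ if for all $m\ge\eta(X)$ and all $x_I\in X$, $X_{\mathrm{grid}}(x_I,m)$ is connected. With $v\in\{(-1,0),(1,0),(0,1),(0,-1)\}$, let $U_m=\{2^{-m}v\}$. For $x_I\in\mathrm{int}X$ let $x_G(x_I,m):=B_r(x_G)\cap(x_I+2^{-m}(\mathbb{Z}\times\mathbb{Z}))$ and $P_{\mathrm{grid}}(X,x_I,x_G,m):=(X_{\mathrm{grid}}(x_I,m),U_m,f_m,x_I,x_G(x_I,m))$, where $f_m(x,u)=x+u$ if $x+u\in X_{\mathrm{grid}}(x_I,m)$ and $f_m(x,u)=x$ otherwise. Planning problems $(X,U,f,x_I,X_G)$ and $(X',U',f',x_I',X_G')$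 are isomorphic if there are bijections $\varphi:X\to X'$, $\xi:U\to U'$ with $\varphi(x_I)=x_I'$, $\varphi(X_G)=X_G'$ and $f'(\varphi(x),\xi(u))=\varphi(f(x,u))$ for all $x\in X$, $u\in U$. *)

theory Defs
  imports "HOL-Analysis.Analysis"
begin

type_synonym pt = "real \<times> real"

definition C_int :: "pt set set" where
  "C_int = {X. compact X \<and> connected X \<and> interior X \<noteq> {}}"

definition lattice :: "pt \<Rightarrow> nat \<Rightarrow> pt set" where
  "lattice x m = {x + ((2::real) powr (- real m)) *\<^sub>R (of_int i, of_int j) | i j :: int. True}"

definition X_grid :: "pt set \<Rightarrow> pt \<Rightarrow> nat \<Rightarrow> pt set" where
  "X_grid X x m = interior X \<inter> lattice x m"

definition grid_adj :: "pt set \<Rightarrow> nat \<Rightarrow> (pt \<times> pt) set" where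
  "grid_adj S m = {(p, q). p \<in> S \<and> q \<in> S \<and> dist p q = (2::real) powr (- real m)}"

definition grid_connected :: "pt set \<Rightarrow> nat \<Rightarrow> bool" where
  "grid_connected S m \<longleftrightarrow> (\<forall>p\<in>S. \<forall>q\<in>S. (p, q) \<in> (grid_adj S m)\<^sup>*)"

definition admits_GCGR :: "pt set \<Rightarrow> nat \<Rightarrow> bool" where
  "admits_GCGR X eta \<longleftrightarrow>
     (\<forall>m\<ge>eta. \<forall>xI\<in>X. grid_connected (X_grid X xI m) m)"

definition U_grid :: "nat \<Rightarrow> pt set" where
  "U_grid m = (\<lambda>v. ((2::real) powr (- real m)) *\<^sub>R v) ` {(-1, 0), (1, 0), (0, 1), (0, -1)}"

definition f_grid :: "pt set \<Rightarrow> pt \<Rightarrow> nat \<Rightarrow> pt \<Rightarrow> pt \<Rightarrow> pt" where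
  "f_grid X xI m x u = (if x + u \<in> X_grid X xI m then x + u else x)"

text \<open>Planning problems (states, actions, transition, initial state, goal set).\<close>
type_synonym ('s, 'u) planning_problem = "'s set \<times> 'u set \<times> ('s \<Rightarrow> 'u \<Rightarrow> 's) \<times> 's \<times> 's set"

definition goal_grid :: "pt \<Rightarrow> real \<Rightarrow> pt \<Rightarrow> nat \<Rightarrow> pt set" where
  "goal_grid xG r xI m = ball xG r \<inter> lattice xI m"

definition P_grid :: "pt set \<Rightarrow> pt \<Rightarrow> pt \<Rightarrow> real \<Rightarrow> nat \<Rightarrow> (pt, pt) planning_problem" where
  "P_grid X xI xG r m = (X_grid X xI m, U_grid m, f_grid X xI m, xI, goal_grid xG r xI m)"

definition pp_isomorphic :: "('s, 'u) planning_problem \<Rightarrow> ('t, 'v) planning_problem \<Rightarrow> bool" where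
  "pp_isomorphic P P' \<longleftrightarrow>
     (case P of (X, U, f, xI, XG) \<Rightarrow> case P' of (X', U', f', xI', XG') \<Rightarrow>
       (\<exists>\<phi> \<xi>. bij_betw \<phi> X X' \<and> bij_betw \<xi> U U' \<and> \<phi> xI = xI' \<and> \<phi> ` XG = XG' \<and>
              (\<forall>x\<in>X. \<forall>u\<in>U. f' (\<phi> x) (\<xi> u) = \<phi> (f x u))))"

end

theory Submission
  imports Defs
begin

text \<open>Translating the whole plane by \<open>y - x\<close> carries the lattice through \<open>x\<close> onto the lattice
  through \<open>y\<close>. Hence two initial states whose lattices meet \<open>int X\<close> and the goal ball in the same
  sets of integer index pairs yield isomorphic planning problems, with the translation as state
  bijection and the identity on actions. Since \<open>X\<close> and the ball are bounded, these index sets lie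
  in a fixed finite box of \<open>\<int> \<times> \<int>\<close>, so only finitely many of them occur.\<close>

definition grid_point :: "pt \<Rightarrow> nat \<Rightarrow> int \<times> int \<Rightarrow> pt" where
  "grid_point x m = (\<lambda>(i, j). x + ((2::real) powr (- real m)) *\<^sub>R (of_int i, of_int j))"

definition grid_indices :: "pt set \<Rightarrow> pt \<Rightarrow> nat \<Rightarrow> (int \<times> int) set" where
  "grid_indices A x m = {k. grid_point x m k \<in> A}"

lemma lattice_eq_range_grid_point: "lattice x m = range (grid_point x m)"
  unfolding lattice_def grid_point_def
  by (auto simp del: scaleR_Pair intro: image_eqI[where x = "(i, j)" for i j])

lemma Int_lattice_eq_image_grid_indices: "A \<inter> lattice x m = grid_point x m ` grid_indices A x m"
  unfolding lattice_eq_range_grid_point grid_indices_def by auto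

lemma translate_grid_point: "grid_point x m k - x + y = grid_point y m k"
  unfolding grid_point_def by (auto split: prod.split)

lemma translate_Int_lattice:
  assumes "grid_indices A x m = grid_indices A y m"
  shows "(\<lambda>p. p - x + y) ` (A \<inter> lattice x m) = A \<inter> lattice y m"
  unfolding Int_lattice_eq_image_grid_indices image_image translate_grid_point assms ..

lemma grid_indices_subset_box:
  fixes R :: real and m :: nat
  assumes A: "\<forall>a\<in>A. norm a \<le> R" and x: "norm x \<le> R"
  defines "N \<equiv> \<lceil>2 * R / 2 powr (- real m)\<rceil>"
  shows "grid_indices A x m \<subseteq> {-N..N} \<times> {-N..N}"
proof safe
  fix i j assume "(i, j) \<in> grid_indices A x m"
  define h :: real where "h = 2 powr (- real m)"
  have "h > 0" unfolding h_def by simp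
  define z :: pt where "z = h *\<^sub>R (of_int i, of_int j)"
  have "x + z \<in> A"
    using \<open>(i, j) \<in> grid_indices A x m\<close> unfolding grid_indices_def grid_point_def z_def h_def by simp
  then have "norm (x + z) \<le> R"
    using A by blast
  then have "norm z \<le> 2 * R"
    using x norm_triangle_ineq4[of "x + z" x] by simp
  moreover have "h * \<bar>of_int i\<bar> = \<bar>fst z\<bar>" "h * \<bar>of_int j\<bar> = \<bar>snd z\<bar>"
    using \<open>h > 0\<close> by (simp_all add: z_def abs_mult)
  moreover have "\<bar>fst z\<bar> \<le> norm z" "\<bar>snd z\<bar> \<le> norm z"
    using norm_fst_le[of "fst z" "snd z"] norm_snd_le[of "snd z" "fst z"] by simp_all
  ultimately have "\<bar>of_int i\<bar> \<le> 2 * R / h" "\<bar>of_int j\<bar> \<le> 2 * R / h"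
    using \<open>h > 0\<close> by (simp_all add: pos_le_divide_eq mult.commute)
  then have "\<bar>i\<bar> \<le> N" "\<bar>j\<bar> \<le> N"
    unfolding N_def h_def by (metis ceiling_mono ceiling_of_int of_int_abs)+
  then show "i \<in> {-N..N}" "j \<in> {-N..N}"
    by (simp_all add: abs_le_iff)
qed

lemma finite_grid_indices_image:
  assumes "bounded A" "bounded C"
  shows "finite ((\<lambda>x. grid_indices A x m) ` C)"
proof -
  obtain R where R: "\<forall>a\<in>A \<union> C. norm a \<le> R"
    using bounded_Un assms by (metis bounded_iff)
  define N where "N = \<lceil>2 * R / 2 powr (- real m)\<rceil>"
  have "(\<lambda>x. grid_indices A x m) ` C \<subseteq> Pow ({-N..N} \<times> {-N..N})"
    using grid_indices_subset_box[of A R] R unfolding N_def by auto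
  then show ?thesis
    by (rule finite_subset) simp
qed

lemma finite_representatives:
  assumes "finite (f ` S)"
  obtains F where "finite F" "F \<subseteq> S" "\<And>x. x \<in> S \<Longrightarrow> \<exists>y\<in>F. f y = f x"
proof
  show "finite (inv_into S f ` f ` S)"
    using assms by simp
  show "inv_into S f ` f ` S \<subseteq> S"
    by (auto intro: inv_into_into)
  show "\<exists>y\<in>inv_into S f ` f ` S. f y = f x" if "x \<in> S" for x
    using that by (auto intro: f_inv_into_f)
qed

lemma pp_isomorphic_P_grid_if_grid_indices_eq:
  assumes "grid_indices (interior X) x m = grid_indices (interior X) y m"
    and "grid_indices (ball xG r) x m = grid_indices (ball xG r) y m"
  shows "pp_isomorphic (P_grid X x xG r m) (P_grid X y xG r m)"
proof -
  define \<phi> where "\<phi> p = p - x + y" for p :: pt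
  have "inj \<phi>"
    unfolding \<phi>_def by (rule injI) simp
  have states: "\<phi> ` X_grid X x m = X_grid X y m"
    unfolding X_grid_def \<phi>_def using translate_Int_lattice[OF assms(1)] .
  have goals: "\<phi> ` goal_grid xG r x m = goal_grid xG r y m"
    unfolding goal_grid_def \<phi>_def using translate_Int_lattice[OF assms(2)] .
  have "bij_betw \<phi> (X_grid X x m) (X_grid X y m)"
    using states \<open>inj \<phi>\<close> by (auto simp: bij_betw_def intro: inj_on_subset)
  moreover have "f_grid X y m (\<phi> p) u = \<phi> (f_grid X x m p u)" for p u
  proof -
    have "\<phi> p + u = \<phi> (p + u)"
      unfolding \<phi>_def by simp
    moreover have "\<phi> (p + u) \<in> X_grid X y m \<longleftrightarrow> p + u \<in> X_grid X x m"
      unfolding states[symmetric] using \<open>inj \<phi>\<close> by (rule inj_image_mem_iff)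
    ultimately show ?thesis
      unfolding f_grid_def by simp
  qed
  moreover have "\<phi> x = y"
    unfolding \<phi>_def by simp
  ultimately show ?thesis
    unfolding pp_isomorphic_def P_grid_def prod.case using goals
    by (intro exI[of _ \<phi>] exI[of _ id]) simp
qed

theorem proposition2:
  fixes X :: "pt set" and eta :: nat and xG :: pt and r :: real and m :: nat
  assumes "X \<in> C_int"
    and "admits_GCGR X eta"
    and "xG \<in> interior X"
    and "r > 0"
    and "m \<ge> eta"
  shows "\<exists>F. finite F \<and> F \<subseteq> interior X \<and>
           (\<forall>xI\<in>interior X. \<exists>y\<in>F. pp_isomorphic (P_grid X xI xG r m) (P_grid X y xG r m))"
proof -
  define key where
    "key x = (grid_indices (interior X) x m, grid_indices (ball xG r) x m)" for x
  have "bounded (interior X)"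
    using assms(1) unfolding C_int_def by (auto intro: compact_imp_bounded)
  then have "finite ((\<lambda>x. grid_indices (interior X) x m) ` interior X \<times>
                     (\<lambda>x. grid_indices (ball xG r) x m) ` interior X)"
    by (simp add: finite_grid_indices_image)
  moreover have "key ` interior X \<subseteq> (\<lambda>x. grid_indices (interior X) x m) ` interior X \<times>
                                      (\<lambda>x. grid_indices (ball xG r) x m) ` interior X"
    unfolding key_def by blast
  ultimately have "finite (key ` interior X)"
    by (rule finite_subset[rotated])
  then obtain F where "finite F" "F \<subseteq> interior X"
    and F: "\<And>x. x \<in> interior X \<Longrightarrow> \<exists>y\<in>F. key y = key x"
    using finite_representatives by blast
  have "pp_isomorphic (P_grid X x xG r m) (P_grid X y xG r m)" if "key y = key x" for x y
    using that unfolding key_def by (intro pp_isomorphic_P_grid_if_grid_indices_eq) simp_all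
  with \<open>finite F\<close> \<open>F \<subseteq> interior X\<close> F show ?thesis
    by meson
qed

end
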